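(* If $0\le p\le\frac12<t\le1$, then bold play is optimal, i.e. $\pi(p,t)=p$.
   Context: Let $\beta_1,\beta_2,\ldots$ be independent Bernoulli random variables with success probability $p$. A stake sequence is a sequence $\gamma=(c_1,c_2,\ldots)$ of non-negative reals with $c_1\ge c_2\ge\cdots$ and $\sum_i c_i=1$; write $S_\gamma=\sum_i c_i\beta_i$. For $0\le p\le t\le 1$ define $\pi(p,t)=\sup\{\mathbf P(S_\gamma\ge t)\mid \gamma \text{ a stake sequence}\}$. Bold play for threshold $t$ is the stake sequence with $c_i=\frac1m$ for $i\le m$ and $c_i=0$ for $i>m$, where $m=\lfloor 1/t\rfloor$; it is optimal if it attains $\pi(p,t)$. For $t>\frac12$ bold play is $c_1=1$, with success probability $p$. *)

theory Defs
  imports "HOL-Probability.Probability"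
begin

text \<open>Stakes are indexed from 0 (c 0 corresponds to c_1 in the paper).\<close>
definition stake_seq :: "(nat \<Rightarrow> real) \<Rightarrow> bool" where
  "stake_seq c \<longleftrightarrow> (\<forall>i. 0 \<le> c i) \<and> (\<forall>i. c (Suc i) \<le> c i) \<and> c sums 1"

text \<open>Probability space of i.i.d. Bernoulli(p) variables beta_i(omega) = omega i.\<close>
definition bern_space :: "real \<Rightarrow> (nat \<Rightarrow> bool) measure" where
  "bern_space p = PiM UNIV (\<lambda>_::nat. measure_pmf (bernoulli_pmf p))"

definition S_gamma :: "(nat \<Rightarrow> real) \<Rightarrow> (nat \<Rightarrow> bool) \<Rightarrow> real" where
  "S_gamma c \<omega> = (\<Sum>i. c i * of_bool (\<omega> i))"

definition success_prob :: "real \<Rightarrow> real \<Rightarrow> (nat \<Rightarrow> real) \<Rightarrow> real" where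
  "success_prob p t c =
     measure (bern_space p) {\<omega> \<in> space (bern_space p). S_gamma c \<omega> \<ge> t}"

definition pi_val :: "real \<Rightarrow> real \<Rightarrow> real" where
  "pi_val p t = (SUP c\<in>{c. stake_seq c}. success_prob p t c)"

end

theory Submission
  imports Defs
begin

text \<open>Because \<open>t > 1/2\<close>, two outcomes that both reach \<open>t\<close> must win a common bet, so the
  success event is an intersecting family of 0-1 sequences, and the \<open>p\<close>-biased measure of an
  intersecting family is at most \<open>p\<close> when \<open>p \<le> 1/2\<close>. For \<open>p \<le> k/m\<close> with \<open>2k \<le> m\<close> this is
  Katona's circle argument: place every coordinate at an independent uniform position \<open>l\<^sub>i\<close> on the
  cycle \<open>\<int>/m\<close>, toss for it an independent coin of bias \<open>p m / k\<close>, and for each rotation \<open>\<theta>\<close> let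
  coordinate \<open>i\<close> succeed when its coin does and \<open>l\<^sub>i + \<theta>\<close> lies in the arc \<open>[0, k)\<close>. Every
  rotation yields an i.i.d. Bernoulli(\<open>p\<close>) sequence, while rotations whose sequences both lie in
  the family have intersecting arcs, so at most \<open>k\<close> of the \<open>m\<close> rotations do. Taking expectations
  bounds the measure by \<open>k/m\<close>, which can be chosen arbitrarily close to \<open>p\<close>. Bold play attains \<open>p\<close>.\<close>

lemma intersecting_arcs_close:
  fixes l \<theta> \<theta>' m k :: nat
  assumes "\<theta> < \<theta>'" "\<theta>' < m" "(l + \<theta>) mod m < k" "(l + \<theta>') mod m < k"
  shows "\<theta>' - \<theta> < k \<or> m - k < \<theta>' - \<theta>"
proof -
  define a where "a = (l + \<theta>) mod m"
  define d where "d = \<theta>' - \<theta>"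
  have "a < m" "d < m"
    using assms unfolding a_def d_def by auto
  have shift: "(l + \<theta>') mod m = (a + d) mod m"
  proof -
    have "l + \<theta>' = (l + \<theta>) + (\<theta>' - \<theta>)" using assms(1) by simp
    then show ?thesis unfolding a_def d_def by (metis mod_add_left_eq)
  qed
  show ?thesis
  proof (cases "a + d < m")
    case True
    then show ?thesis using assms(4) shift d_def by simp
  next
    case False
    then have "(a + d) mod m = a + d - m" using \<open>a < m\<close> \<open>d < m\<close> by (simp add: le_mod_geq)
    moreover have "a < k" using assms(3) a_def by simp
    ultimately show ?thesis using assms(4) shift d_def False by arith
  qed
qed

lemma card_window_without_antipodes_le:
  fixes k m :: nat and D :: "nat set"
  assumes "k \<le> m - k"
    and window: "\<And>d. d \<in> D \<Longrightarrow> d < k \<or> m - k < d \<and> d < m"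
    and no_antipode: "\<And>d. d \<in> D \<Longrightarrow> d + (m - k) \<notin> D"
  shows "card D \<le> k"
proof -
  define \<phi> where "\<phi> d = (if d < k then d else d - (m - k))" for d
  have "\<phi> d < k" if "d \<in> D" for d
    using window[OF that] by (auto simp: \<phi>_def)
  then have "\<phi> ` D \<subseteq> {..<k}"
    by auto
  moreover have "inj_on \<phi> D"
  proof (rule inj_onI)
    fix d d' assume d: "d \<in> D" "d' \<in> D" "\<phi> d = \<phi> d'"
    show "d = d'"
      using window[OF d(1)] window[OF d(2)] no_antipode[OF d(1)] no_antipode[OF d(2)] d
      unfolding \<phi>_def by (auto split: if_splits)
  qed
  ultimately show ?thesis
    using card_inj_on_le[of \<phi> D "{..<k}"] by simp
qed

text \<open>Katona's lemma, reading \<open>{l. (l + \<theta>) mod m < k}\<close> as the arc of length \<open>k\<close> starting at \<open>-\<theta>\<close>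
  on the cycle of length \<open>m\<close>.\<close>

lemma card_intersecting_arcs_le:
  fixes k m :: nat and \<Theta> :: "nat set"
  assumes "2 * k \<le> m" "\<Theta> \<subseteq> {..<m}"
    and meet: "\<And>\<theta> \<theta>'. \<theta> \<in> \<Theta> \<Longrightarrow> \<theta>' \<in> \<Theta> \<Longrightarrow> \<exists>l. (l + \<theta>) mod m < k \<and> (l + \<theta>') mod m < k"
  shows "card \<Theta> \<le> k"
proof (cases "\<Theta> = {}")
  case True
  then show ?thesis by simp
next
  case False
  have "finite \<Theta>" using assms(2) finite_subset by blast
  define t0 where "t0 = Min \<Theta>"
  have t0: "t0 \<in> \<Theta>" "\<And>x. x \<in> \<Theta> \<Longrightarrow> t0 \<le> x"
    using \<open>finite \<Theta>\<close> False by (auto simp: t0_def)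
  have "0 < k" using meet[OF t0(1) t0(1)] by auto
  have close: "\<theta>' - \<theta> < k \<or> m - k < \<theta>' - \<theta>" if "\<theta> \<in> \<Theta>" "\<theta>' \<in> \<Theta>" "\<theta> < \<theta>'" for \<theta> \<theta>'
    using meet[OF that(1,2)] intersecting_arcs_close[OF that(3)] that(2) assms(2) by blast
  have "card \<Theta> = card ((\<lambda>x. x - t0) ` \<Theta>)"
    using t0(2) by (intro card_image[symmetric] inj_on_diff_nat) blast
  also have "\<dots> \<le> k"
  proof (rule card_window_without_antipodes_le)
    show "k \<le> m - k" using assms(1) by simp
  next
    fix d assume "d \<in> (\<lambda>x. x - t0) ` \<Theta>"
    then obtain x where x: "x \<in> \<Theta>" "d = x - t0" by blast
    have "x < m" using x(1) assms(2) by auto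
    show "d < k \<or> m - k < d \<and> d < m"
    proof (cases "x = t0")
      case True
      then show ?thesis using x(2) \<open>0 < k\<close> by simp
    next
      case False
      then show ?thesis using close[OF t0(1) x(1)] t0(2)[OF x(1)] x(2) \<open>x < m\<close> by auto
    qed
    show "d + (m - k) \<notin> (\<lambda>x. x - t0) ` \<Theta>"
    proof
      assume "d + (m - k) \<in> (\<lambda>x. x - t0) ` \<Theta>"
      then obtain y where y: "y \<in> \<Theta>" "d + (m - k) = y - t0" by blast
      then have "x < y" "y - x = m - k"
        using x(2) t0(2)[OF x(1)] t0(2)[OF y(1)] assms(1) \<open>0 < k\<close> by auto
      then show False using close[OF x(1) y(1)] assms(1) by auto
    qed
  qed
  finally show ?thesis .
qed

lemma inj_on_add_mod:
  fixes m \<theta> :: nat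
  shows "inj_on (\<lambda>l. (l + \<theta>) mod m) {..<m}"
proof -
  have same: "x = y" if "x < m" "y < m" "x \<le> y" "(x + \<theta>) mod m = (y + \<theta>) mod m" for x y
  proof -
    have "m dvd y - x"
      using that mod_eq_dvd_iff_nat[of "x + \<theta>" "y + \<theta>" m] by simp
    then show "x = y"
      using that(1-3) nat_dvd_not_less[of "y - x" m] by linarith
  qed
  show ?thesis
  proof (rule inj_onI)
    fix x y assume "x \<in> {..<m}" "y \<in> {..<m}" "(x + \<theta>) mod m = (y + \<theta>) mod m"
    then show "x = y"
      using same[of x y] same[of y x] by (cases "x \<le> y") auto
  qed
qed

lemma card_arc:
  fixes m k \<theta> :: nat
  assumes "k \<le> m"
  shows "card {l \<in> {..<m}. (l + \<theta>) mod m < k} = k"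
proof -
  let ?f = "\<lambda>l. (l + \<theta>) mod m"
  have "?f ` {..<m} \<subseteq> {..<m}"
    by (intro image_subsetI) (simp add: mod_less_divisor)
  then have "?f ` {..<m} = {..<m}"
    by (intro endo_inj_surj inj_on_add_mod) simp_all
  have "?f ` {l \<in> {..<m}. ?f l < k} = {..<k}"
  proof
    show "{..<k} \<subseteq> ?f ` {l \<in> {..<m}. ?f l < k}"
    proof
      fix j assume "j \<in> {..<k}"
      then have "j \<in> ?f ` {..<m}"
        using \<open>?f ` {..<m} = {..<m}\<close> assms by simp
      then obtain l where "l < m" "j = ?f l"
        by blast
      then show "j \<in> ?f ` {l \<in> {..<m}. ?f l < k}"
        using \<open>j \<in> {..<k}\<close> by (intro image_eqI[of _ _ l]) simp_all
    qed
  qed auto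
  then have "card (?f ` {l \<in> {..<m}. ?f l < k}) = k"
    by simp
  moreover have "inj_on ?f {l \<in> {..<m}. ?f l < k}"
    by (rule inj_on_subset[OF inj_on_add_mod]) auto
  ultimately show ?thesis
    by (simp add: card_image)
qed

definition arc_coins :: "nat \<Rightarrow> nat \<Rightarrow> real \<Rightarrow> (nat \<times> bool) pmf" where
  "arc_coins m k p = pair_pmf (pmf_of_set {..<m}) (bernoulli_pmf (p * m / k))"

definition arc_trial :: "nat \<Rightarrow> nat \<Rightarrow> nat \<Rightarrow> nat \<times> bool \<Rightarrow> bool" where
  "arc_trial m k \<theta> = (\<lambda>(l, d). (l + \<theta>) mod m < k \<and> d)"

lemma map_pmf_arc_trial:
  fixes m k \<theta> :: nat and p :: real
  assumes "1 \<le> k" "k \<le> m" "0 \<le> p" "p \<le> k / m"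
  shows "map_pmf (arc_trial m k \<theta>) (arc_coins m k p) = bernoulli_pmf p"
proof -
  have "m > 0" using assms by simp
  have "p * m / k \<le> 1" using assms \<open>m > 0\<close> by (simp add: field_simps)
  have "p \<le> 1" using assms(2,4) \<open>m > 0\<close> order.trans[of p "k / m" 1] by simp
  let ?M = "map_pmf (arc_trial m k \<theta>) (arc_coins m k p)"
  have "pmf ?M True = measure_pmf.prob (pmf_of_set {..<m}) {l. (l + \<theta>) mod m < k}
                      * measure_pmf.prob (bernoulli_pmf (p * m / k)) {True}"
  proof -
    have "arc_trial m k \<theta> -` {True} = {l. (l + \<theta>) mod m < k} \<times> {True}"
      by (auto simp: arc_trial_def)
    then show ?thesis
      unfolding pmf_map arc_coins_def by (simp add: measure_pmf_prob_product)
  qed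
  also have "measure_pmf.prob (pmf_of_set {..<m}) {l. (l + \<theta>) mod m < k} = k / m"
    using \<open>m > 0\<close> card_arc[OF assms(2), of \<theta>] by (subst measure_pmf_of_set) (auto simp: Int_def)
  also have "measure_pmf.prob (bernoulli_pmf (p * m / k)) {True} = p * m / k"
    using assms \<open>p * m / k \<le> 1\<close> by (simp add: measure_pmf_single)
  finally have "pmf ?M True = p" using \<open>m > 0\<close> assms(1) by simp
  show ?thesis
  proof (rule pmf_eqI)
    fix b :: bool
    show "pmf ?M b = pmf (bernoulli_pmf p) b"
      using \<open>pmf ?M True = p\<close> assms(3) \<open>p \<le> 1\<close> by (cases b) (simp_all add: pmf_False_conv_True)
  qed
qed

lemma measurable_PiM_iid_map:
  fixes D :: "'a pmf" and E :: "'b pmf" and g :: "'a \<Rightarrow> 'b"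
  shows "(\<lambda>\<omega> i. g (\<omega> i)) \<in> measurable (PiM (UNIV::'i set) (\<lambda>_. measure_pmf D)) (PiM UNIV (\<lambda>_. measure_pmf E))"
proof (rule measurable_PiM_single')
  fix i :: 'i
  have "(\<lambda>\<omega>. \<omega> i) \<in> measurable (PiM (UNIV::'i set) (\<lambda>_. measure_pmf D)) (measure_pmf D)"
    by (rule measurable_component_singleton) simp
  moreover have "g \<in> measurable (measure_pmf D) (count_space UNIV)" by simp
  ultimately show "(\<lambda>\<omega>. g (\<omega> i)) \<in> measurable (PiM (UNIV::'i set) (\<lambda>_. measure_pmf D)) (measure_pmf E)"
    using measurable_compose[of "\<lambda>\<omega>. \<omega> i" _ "measure_pmf D" g "count_space UNIV"]
    by (simp add: measurable_cong_sets)
qed (auto simp: space_PiM)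

lemma distr_PiM_iid_map_pmf:
  fixes D :: "'a pmf" and g :: "'a \<Rightarrow> 'b"
  shows "distr (PiM (UNIV::'i set) (\<lambda>_. measure_pmf D)) (PiM UNIV (\<lambda>_. measure_pmf (map_pmf g D))) (\<lambda>\<omega> i. g (\<omega> i))
         = PiM UNIV (\<lambda>_. measure_pmf (map_pmf g D))"
    (is "distr ?K ?I ?t = ?I")
proof (rule measure_eqI_PiM_infinite[symmetric, OF refl])
  interpret prob_space ?I
    by (intro prob_space_PiM) (auto simp: measure_pmf.prob_space_axioms)
  show "finite_measure ?I"
    by unfold_locales
  show "sets (distr ?K ?I ?t) = sets ?I" by simp
  fix A and J :: "'i set" assume J: "finite J" "J \<subseteq> UNIV"
    and A: "\<And>i. i \<in> J \<Longrightarrow> A i \<in> sets (measure_pmf (map_pmf g D))"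
  let ?box = "prod_emb (UNIV::'i set) (\<lambda>_. measure_pmf (map_pmf g D)) J (Pi\<^sub>E J A)"
  have "?I ?box = (\<Prod>j\<in>J. emeasure (measure_pmf (map_pmf g D)) (A j))"
    using J by (intro emeasure_PiM_emb) (auto simp: measure_pmf.prob_space_axioms)
  also have "\<dots> = (\<Prod>j\<in>J. emeasure (measure_pmf D) (g -` A j))"
    by (intro prod.cong refl) (simp add: map_pmf_rep_eq emeasure_distr)
  also have "\<dots> = ?K (prod_emb UNIV (\<lambda>_. measure_pmf D) J (Pi\<^sub>E J (\<lambda>j. g -` A j)))"
    using J by (intro emeasure_PiM_emb[symmetric]) (auto simp: measure_pmf.prob_space_axioms)
  also have "prod_emb UNIV (\<lambda>_. measure_pmf D) J (Pi\<^sub>E J (\<lambda>j. g -` A j)) = ?t -` ?box \<inter> space ?K"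
    by (auto simp: prod_emb_def space_PiM PiE_iff)
  also have "?K \<dots> = distr ?K ?I ?t ?box"
    using J A by (intro emeasure_distr[symmetric] measurable_PiM_iid_map) (auto intro!: sets_PiM_I)
  finally show "?I ?box = distr ?K ?I ?t ?box" .
qed

lemma (in prob_space) sum_prob_le_of_card_le:
  assumes "finite I" "\<And>i. i \<in> I \<Longrightarrow> A i \<in> events"
    and "\<And>\<omega>. \<omega> \<in> space M \<Longrightarrow> card {i \<in> I. \<omega> \<in> A i} \<le> k"
  shows "(\<Sum>i\<in>I. prob (A i)) \<le> k"
proof -
  have integrable: "integrable M (indicator (A i) :: _ \<Rightarrow> real)" if "i \<in> I" for i
    using assms(2)[OF that] by (simp add: less_top[symmetric])
  have "(\<Sum>i\<in>I. prob (A i)) = (\<Sum>i\<in>I. expectation (indicator (A i)))"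
    using assms(2) by (intro sum.cong refl) (simp add: Int_absorb2 sets.sets_into_space)
  also have "\<dots> = expectation (\<lambda>\<omega>. \<Sum>i\<in>I. indicator (A i) \<omega>)"
    using integrable by (rule Bochner_Integration.integral_sum[symmetric])
  also have "\<dots> \<le> expectation (\<lambda>_. real k)"
  proof (rule integral_mono)
    show "(\<Sum>i\<in>I. indicator (A i) \<omega>) \<le> real k" if "\<omega> \<in> space M" for \<omega>
    proof -
      have "(\<Sum>i\<in>I. indicator (A i) \<omega> :: real) = card {i \<in> I. \<omega> \<in> A i}"
        using assms(1) by (simp add: indicator_def sum.inter_filter[symmetric] Int_def)
      then show ?thesis using assms(3)[OF that] by simp
    qed
  qed (use integrable in auto)
  also have "\<dots> = k" by (simp add: prob_space)
  finally show ?thesis .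
qed

definition intersecting :: "('i \<Rightarrow> bool) set \<Rightarrow> bool" where
  "intersecting E \<longleftrightarrow> (\<forall>\<omega>\<in>E. \<forall>\<omega>'\<in>E. \<exists>i. \<omega> i \<and> \<omega>' i)"

lemma measure_intersecting_le_ratio:
  fixes k m :: nat
  assumes E: "E \<in> sets (bern_space p)" "intersecting E"
    and k: "1 \<le> k" "2 * k \<le> m" and p: "0 \<le> p" "p \<le> k / m"
  shows "measure (bern_space p) E \<le> k / m"
proof -
  define \<Omega> where "\<Omega> = PiM (UNIV::nat set) (\<lambda>_. measure_pmf (arc_coins m k p))"
  define X where "X \<theta> \<omega> i = arc_trial m k \<theta> (\<omega> i)" for \<theta> and \<omega> :: "nat \<Rightarrow> nat \<times> bool" and i
  define A where "A \<theta> = X \<theta> -` E \<inter> space \<Omega>" for \<theta>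
  interpret \<Omega>: prob_space \<Omega>
    unfolding \<Omega>_def by (intro prob_space_PiM) (auto simp: measure_pmf.prob_space_axioms)
  have X_measurable: "X \<theta> \<in> measurable \<Omega> (bern_space p)" for \<theta>
    unfolding X_def \<Omega>_def bern_space_def by (rule measurable_PiM_iid_map)
  have A_events: "A \<theta> \<in> \<Omega>.events" for \<theta>
    unfolding A_def using measurable_sets[OF X_measurable E(1)] .
  have prob_A: "\<Omega>.prob (A \<theta>) = measure (bern_space p) E" for \<theta>
  proof -
    have "distr \<Omega> (bern_space p) (X \<theta>) = bern_space p"
      using distr_PiM_iid_map_pmf[of "arc_coins m k p" "arc_trial m k \<theta>"] map_pmf_arc_trial[of k m p \<theta>] k p
      unfolding \<Omega>_def X_def bern_space_def by simp
    then have "measure (bern_space p) E = measure (distr \<Omega> (bern_space p) (X \<theta>)) E"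
      by simp
    also have "\<dots> = \<Omega>.prob (A \<theta>)"
      unfolding A_def by (rule measure_distr[OF X_measurable E(1)])
    finally show ?thesis ..
  qed
  have few_rotations: "card {\<theta> \<in> {..<m}. \<omega> \<in> A \<theta>} \<le> k" for \<omega>
  proof (rule card_intersecting_arcs_le[OF k(2)])
    fix \<theta> \<theta>' assume "\<theta> \<in> {\<theta> \<in> {..<m}. \<omega> \<in> A \<theta>}" "\<theta>' \<in> {\<theta> \<in> {..<m}. \<omega> \<in> A \<theta>}"
    then have "X \<theta> \<omega> \<in> E" "X \<theta>' \<omega> \<in> E" unfolding A_def by auto
    then obtain i where "X \<theta> \<omega> i" "X \<theta>' \<omega> i"
      using E(2) unfolding intersecting_def by blast
    then show "\<exists>l. (l + \<theta>) mod m < k \<and> (l + \<theta>') mod m < k"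
      unfolding X_def arc_trial_def by (auto split: prod.splits)
  qed auto
  have "real m * measure (bern_space p) E = (\<Sum>\<theta><m. \<Omega>.prob (A \<theta>))"
    using prob_A by simp
  also have "\<dots> \<le> k"
    using A_events few_rotations by (intro \<Omega>.sum_prob_le_of_card_le) auto
  finally show ?thesis
    using k by (simp add: field_simps)
qed

lemma ratio_above_approx:
  fixes p e :: real
  assumes "0 \<le> p" "p \<le> 1/2" "0 < e"
  obtains k m :: nat where "1 \<le> k" "2 * k \<le> m" "p \<le> k / m" "k / m \<le> p + e"
proof -
  obtain j :: nat where j: "0 < j" "1 / real j < e"
    using assms(3) by (metis ex_inverse_of_nat_less inverse_eq_divide)
  define m where "m = 2 * j"
  define k where "k = max 1 (nat \<lceil>p * m\<rceil>)"
  have "real m > 0" using j by (simp add: m_def)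
  have "p * m \<le> j" using assms j by (simp add: m_def)
  then have "2 * k \<le> m"
    using j by (simp add: k_def m_def ceiling_le_iff nat_le_iff)
  have "p * m \<le> k"
    unfolding k_def by linarith
  moreover have "k \<le> p * m + 1"
    using assms \<open>real m > 0\<close> unfolding k_def by (auto simp: max_def intro: of_int_ceiling_le_add_one)
  ultimately have "p \<le> k / m" "k / m \<le> p + 1 / m"
    using \<open>real m > 0\<close> by (simp_all add: field_simps)
  moreover have "1 / real m \<le> 1 / real j"
    using j by (simp add: m_def frac_le)
  moreover have "1 \<le> k"
    by (simp add: k_def)
  ultimately show ?thesis
    using that \<open>2 * k \<le> m\<close> j(2) by simp
qed

lemma measure_intersecting_le:
  assumes "E \<in> sets (bern_space p)" "intersecting E" "0 \<le> p" "p \<le> 1/2"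
  shows "measure (bern_space p) E \<le> p"
proof (rule field_le_epsilon)
  fix e :: real assume "0 < e"
  then obtain k m :: nat where "1 \<le> k" "2 * k \<le> m" "p \<le> k / m" "k / m \<le> p + e"
    using ratio_above_approx assms(3,4) by blast
  then have "measure (bern_space p) E \<le> k / m"
    using measure_intersecting_le_ratio[OF assms(1,2)] assms(3) by blast
  with \<open>k / m \<le> p + e\<close> show "measure (bern_space p) E \<le> p + e"
    by linarith
qed

lemma summable_stake_weights:
  assumes "stake_seq c"
  shows "summable (\<lambda>i. c i * of_bool (\<omega> i))"
proof (rule summable_comparison_test'[where N=0])
  show "summable c" using assms unfolding stake_seq_def by (auto simp: sums_iff)
  show "norm (c n * of_bool (\<omega> n)) \<le> c n" for n using assms unfolding stake_seq_def by auto
qed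

lemma S_gamma_disjoint_le_1:
  assumes "stake_seq c" "\<And>i. \<not> (\<omega> i \<and> \<omega>' i)"
  shows "S_gamma c \<omega> + S_gamma c \<omega>' \<le> 1"
proof -
  have c: "summable c" "suminf c = 1" "\<And>i. 0 \<le> c i"
    using assms(1) unfolding stake_seq_def by (auto simp: sums_iff)
  have "S_gamma c \<omega> + S_gamma c \<omega>' = (\<Sum>i. c i * of_bool (\<omega> i) + c i * of_bool (\<omega>' i))"
    unfolding S_gamma_def by (rule suminf_add) (rule summable_stake_weights[OF assms(1)])+
  also have "\<dots> \<le> (\<Sum>i. c i)"
  proof (rule suminf_le)
    show "c i * of_bool (\<omega> i) + c i * of_bool (\<omega>' i) \<le> c i" for i
      using assms(2)[of i] c(3)[of i] by auto
    show "summable (\<lambda>i. c i * of_bool (\<omega> i) + c i * of_bool (\<omega>' i))"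
      by (intro summable_add summable_stake_weights[OF assms(1)])
  qed (use c in auto)
  finally show ?thesis using c by simp
qed

lemma intersecting_S_gamma_ge:
  assumes "stake_seq c" "1/2 < t"
  shows "intersecting {\<omega>. t \<le> S_gamma c \<omega>}"
  unfolding intersecting_def
proof (intro ballI)
  fix \<omega> \<omega>' assume "\<omega> \<in> {\<omega>. t \<le> S_gamma c \<omega>}" "\<omega>' \<in> {\<omega>. t \<le> S_gamma c \<omega>}"
  then have "\<not> S_gamma c \<omega> + S_gamma c \<omega>' \<le> 1"
    using assms(2) by simp
  then show "\<exists>i. \<omega> i \<and> \<omega>' i"
    using S_gamma_disjoint_le_1[OF assms(1)] by blast
qed

lemma S_gamma_measurable [measurable]: "S_gamma c \<in> borel_measurable (bern_space p)"
  unfolding S_gamma_def bern_space_def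
proof (rule borel_measurable_suminf)
  fix i :: nat
  have "(\<lambda>\<omega>. \<omega> i) \<in> measurable (PiM (UNIV::nat set) (\<lambda>_. measure_pmf (bernoulli_pmf p))) (measure_pmf (bernoulli_pmf p))"
    by (rule measurable_component_singleton) simp
  moreover have "(\<lambda>b. c i * of_bool b :: real) \<in> measurable (measure_pmf (bernoulli_pmf p)) borel" by simp
  ultimately show "(\<lambda>\<omega>. c i * of_bool (\<omega> i)) \<in> borel_measurable (PiM (UNIV::nat set) (\<lambda>_. measure_pmf (bernoulli_pmf p)))"
    using measurable_compose by fastforce
qed

lemma success_prob_le:
  assumes "stake_seq c" "1/2 < t" "0 \<le> p" "p \<le> 1/2"
  shows "success_prob p t c \<le> p"
proof -
  have "{\<omega> \<in> space (bern_space p). t \<le> S_gamma c \<omega>} = {\<omega>. t \<le> S_gamma c \<omega>}"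
    by (simp add: bern_space_def space_PiM)
  moreover have "{\<omega> \<in> space (bern_space p). t \<le> S_gamma c \<omega>} \<in> sets (bern_space p)"
    by measurable
  ultimately show ?thesis
    unfolding success_prob_def
    using measure_intersecting_le intersecting_S_gamma_ge[OF assms(1,2)] assms(3,4) by simp
qed

definition bold_play :: "nat \<Rightarrow> real" where
  "bold_play i = (if i = 0 then 1 else 0)"

lemma stake_seq_bold_play: "stake_seq bold_play"
  unfolding stake_seq_def bold_play_def using sums_single[of 0 "\<lambda>_. 1::real"] by auto

lemma S_gamma_bold_play: "S_gamma bold_play \<omega> = of_bool (\<omega> 0)"
proof -
  have "(\<lambda>i. bold_play i * of_bool (\<omega> i)) = (\<lambda>i. if i = 0 then of_bool (\<omega> 0) else 0)"
    by (auto simp: bold_play_def)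
  then show ?thesis
    unfolding S_gamma_def using sums_unique[OF sums_single[of 0 "\<lambda>_. of_bool (\<omega> 0) :: real"]] by simp
qed

lemma success_prob_bold_play:
  assumes "0 \<le> p" "p \<le> 1" "0 < t" "t \<le> 1"
  shows "success_prob p t bold_play = p"
proof -
  let ?B = "bern_space p"
  have first_measurable: "(\<lambda>\<omega>. \<omega> 0) \<in> measurable ?B (measure_pmf (bernoulli_pmf p))"
    unfolding bern_space_def by (rule measurable_component_singleton) simp
  have "{\<omega> \<in> space ?B. t \<le> S_gamma bold_play \<omega>} = (\<lambda>\<omega>. \<omega> 0) -` {True} \<inter> space ?B"
    using assms by (auto simp: S_gamma_bold_play)
  then have "success_prob p t bold_play = measure ?B ((\<lambda>\<omega>. \<omega> 0) -` {True} \<inter> space ?B)"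
    unfolding success_prob_def by simp
  also have "\<dots> = measure (distr ?B (measure_pmf (bernoulli_pmf p)) (\<lambda>\<omega>. \<omega> 0)) {True}"
    by (rule measure_distr[symmetric, OF first_measurable]) simp
  also have "distr ?B (measure_pmf (bernoulli_pmf p)) (\<lambda>\<omega>. \<omega> 0) = measure_pmf (bernoulli_pmf p)"
    unfolding bern_space_def by (rule distr_PiM_component) (auto simp: measure_pmf.prob_space_axioms)
  finally show ?thesis
    using assms by (simp add: measure_pmf_single)
qed

theorem corollary16:
  fixes p t :: real
  assumes "0 \<le> p" and "p \<le> 1/2" and "1/2 < t" and "t \<le> 1"
  shows "pi_val p t = p"
  unfolding pi_val_def
proof (rule cSup_eq_maximum)
  show "p \<in> (\<lambda>c. success_prob p t c) ` {c. stake_seq c}"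
    using stake_seq_bold_play success_prob_bold_play[of p t] assms
    by (auto intro!: image_eqI[of _ _ bold_play])
  show "x \<le> p" if "x \<in> (\<lambda>c. success_prob p t c) ` {c. stake_seq c}" for x
    using that success_prob_le assms by auto
qed

end
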